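(* Let $G$ and $H$ be nontrivial connected graphs with $\gamma_t(H)=2$. Then $\gamma_t(G)=\gamma_t(G\Box H)$ if and only if one of the following holds: (i) $G$ is isomorphic to $K_2$ and $\gamma(H)=1$; (ii) $H$ is isomorphic to $K_2$ and $G\in\mathcal{F}_1\cup\mathcal{F}_2\cup\mathcal{F}_3$.
   Context: All graphs are finite, simple, undirected. $\gamma(G)$ is the domination number and $\gamma_t(G)$ the total domination number (minimum size of a set $S$ with $N_G(S)=V(G)$, $N_G(S)$ the union of open neighborhoods of vertices of $S$). $G\Box H$ is the Cartesian product: vertex set $V(G)\times V(H)$, with $(u_1,v_1)\sim(u_2,v_2)$ iff either $u_1=u_2$ and $v_1v_2\in E(H)$, or $v_1=v_2$ and $u_1u_2\in E(G)$. $G[X]$ denotes the induced subgraph. The families are: $\mathcal{F}_1$ = graphs $G$ with $\gamma_t(G)=2\gamma(G)$; $\mathcal{F}_2$ = graphs $G$ having a minimum total dominating set $D$ that can be partitioned into two nonempty subsets $D_1,D_2$ with $D_1=V(G)\setminus N_G(D_2)$ and $D_2=V(G)\setminus N_G(D_1)$; $\mathcal{F}_3$ = graphs $G$ whose vertex set can be partitioned into two nonempty subsets $V_1,V_2$ with $G[V_1]\in\mathcal{F}_1$, $G[V_2]\in\mathcal{F}_2$, and $\gamma_t(G)=\gamma_t(G[V_1])+\gamma_t(G[V_2])$. *)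

theory Defs
  imports Main
begin

definition graph :: "'a set \<Rightarrow> ('a \<Rightarrow> 'a \<Rightarrow> bool) \<Rightarrow> bool" where
  "graph V E \<longleftrightarrow> finite V \<and> (\<forall>x y. E x y \<longrightarrow> x \<in> V \<and> y \<in> V)
     \<and> (\<forall>x y. E x y \<longrightarrow> E y x) \<and> (\<forall>x. \<not> E x x)"

definition connected_graph :: "'a set \<Rightarrow> ('a \<Rightarrow> 'a \<Rightarrow> bool) \<Rightarrow> bool" where
  "connected_graph V E \<longleftrightarrow> (\<forall>x\<in>V. \<forall>y\<in>V. E\<^sup>*\<^sup>* x y)"

definition nontrivial_graph :: "'a set \<Rightarrow> ('a \<Rightarrow> 'a \<Rightarrow> bool) \<Rightarrow> bool" where
  "nontrivial_graph V E \<longleftrightarrow> card V \<ge> 2"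

definition nbhd :: "'a set \<Rightarrow> ('a \<Rightarrow> 'a \<Rightarrow> bool) \<Rightarrow> 'a set \<Rightarrow> 'a set" where
  "nbhd V E S = {v \<in> V. \<exists>u\<in>S. E u v}"

definition dominating_set :: "'a set \<Rightarrow> ('a \<Rightarrow> 'a \<Rightarrow> bool) \<Rightarrow> 'a set \<Rightarrow> bool" where
  "dominating_set V E S \<longleftrightarrow> S \<subseteq> V \<and> (\<forall>v\<in>V. v \<in> S \<or> (\<exists>u\<in>S. E u v))"

definition total_dominating_set :: "'a set \<Rightarrow> ('a \<Rightarrow> 'a \<Rightarrow> bool) \<Rightarrow> 'a set \<Rightarrow> bool" where
  "total_dominating_set V E S \<longleftrightarrow> S \<subseteq> V \<and> nbhd V E S = V"

definition domination_number :: "'a set \<Rightarrow> ('a \<Rightarrow> 'a \<Rightarrow> bool) \<Rightarrow> nat" where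
  "domination_number V E = Inf {card S | S. dominating_set V E S}"

(* Inf {} = 0 on nat; only used for graphs that have a total dominating set *)
definition total_domination_number :: "'a set \<Rightarrow> ('a \<Rightarrow> 'a \<Rightarrow> bool) \<Rightarrow> nat" where
  "total_domination_number V E = Inf {card S | S. total_dominating_set V E S}"

definition induced_edges :: "('a \<Rightarrow> 'a \<Rightarrow> bool) \<Rightarrow> 'a set \<Rightarrow> 'a \<Rightarrow> 'a \<Rightarrow> bool" where
  "induced_edges E X = (\<lambda>x y. E x y \<and> x \<in> X \<and> y \<in> X)"

definition cart_edges :: "'a set \<Rightarrow> ('a \<Rightarrow> 'a \<Rightarrow> bool) \<Rightarrow> 'b set \<Rightarrow> ('b \<Rightarrow> 'b \<Rightarrow> bool)
    \<Rightarrow> ('a \<times> 'b) \<Rightarrow> ('a \<times> 'b) \<Rightarrow> bool" where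
  "cart_edges VG EG VH EH = (\<lambda>(u1, v1) (u2, v2).
     u1 \<in> VG \<and> u2 \<in> VG \<and> v1 \<in> VH \<and> v2 \<in> VH \<and>
     ((u1 = u2 \<and> EH v1 v2) \<or> (v1 = v2 \<and> EG u1 u2)))"

definition graph_iso :: "'a set \<Rightarrow> ('a \<Rightarrow> 'a \<Rightarrow> bool) \<Rightarrow> 'b set \<Rightarrow> ('b \<Rightarrow> 'b \<Rightarrow> bool) \<Rightarrow> bool" where
  "graph_iso V E V' E' \<longleftrightarrow> (\<exists>f. bij_betw f V V' \<and> (\<forall>x\<in>V. \<forall>y\<in>V. E x y \<longleftrightarrow> E' (f x) (f y)))"

definition K2_V :: "bool set" where "K2_V = UNIV"
definition K2_E :: "bool \<Rightarrow> bool \<Rightarrow> bool" where "K2_E = (\<lambda>x y. x \<noteq> y)"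

definition in_F1 :: "'a set \<Rightarrow> ('a \<Rightarrow> 'a \<Rightarrow> bool) \<Rightarrow> bool" where
  "in_F1 V E \<longleftrightarrow> (\<exists>S. total_dominating_set V E S) \<and>
     total_domination_number V E = 2 * domination_number V E"

definition in_F2 :: "'a set \<Rightarrow> ('a \<Rightarrow> 'a \<Rightarrow> bool) \<Rightarrow> bool" where
  "in_F2 V E \<longleftrightarrow> (\<exists>D D1 D2. total_dominating_set V E D \<and>
      card D = total_domination_number V E \<and>
      D1 \<noteq> {} \<and> D2 \<noteq> {} \<and> D1 \<union> D2 = D \<and> D1 \<inter> D2 = {} \<and>
      D1 = V - nbhd V E D2 \<and> D2 = V - nbhd V E D1)"

definition in_F3 :: "'a set \<Rightarrow> ('a \<Rightarrow> 'a \<Rightarrow> bool) \<Rightarrow> bool" where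
  "in_F3 V E \<longleftrightarrow> (\<exists>V1 V2. V1 \<noteq> {} \<and> V2 \<noteq> {} \<and> V1 \<union> V2 = V \<and> V1 \<inter> V2 = {} \<and>
      in_F1 V1 (induced_edges E V1) \<and> in_F2 V2 (induced_edges E V2) \<and>
      total_domination_number V E =
        total_domination_number V1 (induced_edges E V1) + total_domination_number V2 (induced_edges E V2))"

end

theory Submission
  imports Defs
begin

text \<open>
  Let \<open>S\<close> be a total dominating set of \<open>G \<box> H\<close>, \<open>P\<close> its projection to \<open>G\<close> and \<open>U\<close> the set of
  vertices of \<open>G\<close> not dominated by \<open>P\<close>. Above \<open>u \<in> U\<close> only vertical edges dominate, so the fibre
  of \<open>S\<close> over \<open>u\<close> totally dominates \<open>H\<close> and has at least two elements; hence
  \<open>|S| \<ge> |P| + |U| \<ge> \<gamma>\<^sub>t(G)\<close>, the last step by adding a neighbour of each vertex of \<open>U\<close> to \<open>P\<close>.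

  If \<open>\<gamma>\<^sub>t(G \<box> H) = \<gamma>\<^sub>t(G)\<close>, all these estimates are sharp for a minimum \<open>S\<close>. When \<open>|H| \<ge> 3\<close>,
  this forces \<open>U = {}\<close>, so \<open>S\<close> is the graph of a map \<open>f\<close> on a minimum total dominating set
  \<open>P\<close> of \<open>G\<close>; private neighbours then pair up the vertices of \<open>P\<close> with equal \<open>f\<close>-values, each
  \<open>f p\<close> dominates \<open>H\<close>, and an exchange argument gives \<open>P = V(G)\<close>, so \<open>G = K\<^sub>2\<close>. When
  \<open>H = K\<^sub>2\<close>, the vertices lying in both layers of \<open>S\<close> dominate a part of \<open>G\<close> belonging to
  \<open>\<F>\<^sub>1\<close>, and the remaining vertices of \<open>S\<close> split the rest into the two halves required by
  \<open>\<F>\<^sub>2\<close>, giving \<open>G \<in> \<F>\<^sub>1 \<union> \<F>\<^sub>2 \<union> \<F>\<^sub>3\<close>.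

  Conversely, \<open>K\<^sub>2 \<box> H\<close> with \<open>\<gamma>(H) = 1\<close> is dominated by two vertices, and for \<open>H = K\<^sub>2\<close> the
  sets \<open>M \<times> V(K\<^sub>2)\<close> (\<open>M\<close> a minimum dominating set, for \<open>\<F>\<^sub>1\<close>) and
  \<open>D\<^sub>1 \<times> {h\<^sub>1} \<union> D\<^sub>2 \<times> {h\<^sub>2}\<close> (for \<open>\<F>\<^sub>2\<close>) totally dominate the product with \<open>\<gamma>\<^sub>t(G)\<close> vertices.
\<close>

lemma nbhd_iff: "v \<in> nbhd V E S \<longleftrightarrow> v \<in> V \<and> (\<exists>u\<in>S. E u v)"
  by (simp add: nbhd_def)

lemma nbhd_induced_iff:
  "v \<in> nbhd X (induced_edges E X) S \<longleftrightarrow> v \<in> X \<and> (\<exists>u\<in>S. u \<in> X \<and> E u v)"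
  unfolding nbhd_def induced_edges_def by auto

lemma total_dominating_set_iff:
  "total_dominating_set V E S \<longleftrightarrow> S \<subseteq> V \<and> (\<forall>v\<in>V. \<exists>u\<in>S. E u v)"
  unfolding total_dominating_set_def nbhd_def by blast

lemma total_dominating_set_induced_iff:
  "total_dominating_set X (induced_edges E X) S \<longleftrightarrow> S \<subseteq> X \<and> (\<forall>v\<in>X. \<exists>u\<in>S. E u v)"
  unfolding total_dominating_set_iff induced_edges_def by blast

lemma total_dominating_set_Un:
  assumes "total_dominating_set V1 (induced_edges E V1) X"
    and "total_dominating_set V2 (induced_edges E V2) Y"
  shows "total_dominating_set (V1 \<union> V2) E (X \<union> Y)"
  using assms unfolding total_dominating_set_iff induced_edges_def by blast

lemma cart_edges_iff:
  "cart_edges VG EG VH EH (a, b) (u, v) \<longleftrightarrow>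
     a \<in> VG \<and> u \<in> VG \<and> b \<in> VH \<and> v \<in> VH \<and> ((a = u \<and> EH b v) \<or> (b = v \<and> EG a u))"
  unfolding cart_edges_def by simp

lemma total_domination_number_le:
  "total_dominating_set V E S \<Longrightarrow> total_domination_number V E \<le> card S"
  unfolding total_domination_number_def by (rule cInf_lower) auto

lemma total_domination_number_obtain:
  assumes "total_dominating_set V E S0"
  obtains S where "total_dominating_set V E S" "card S = total_domination_number V E"
proof -
  have "{card S | S. total_dominating_set V E S} \<noteq> {}" using assms by auto
  from Inf_nat_def1[OF this] show ?thesis
    using that unfolding total_domination_number_def by auto
qed

lemma domination_number_le:
  "dominating_set V E S \<Longrightarrow> domination_number V E \<le> card S"
  unfolding domination_number_def by (rule cInf_lower) auto

lemma domination_number_obtain: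
  assumes "dominating_set V E S0"
  obtains S where "dominating_set V E S" "card S = domination_number V E"
proof -
  have "{card S | S. dominating_set V E S} \<noteq> {}" using assms by auto
  from Inf_nat_def1[OF this] show ?thesis
    using that unfolding domination_number_def by auto
qed

lemma graph_induced_edges_self: "graph V E \<Longrightarrow> induced_edges E V = E"
  unfolding graph_def induced_edges_def by (intro ext) blast

lemma card_eq_sum_card_Image:
  assumes "finite S"
  shows "card S = (\<Sum>u\<in>Domain S. card (S `` {u}))"
proof -
  have "S = Sigma (Domain S) (\<lambda>u. S `` {u})" by auto
  then show ?thesis using card_SigmaI[of "Domain S" "\<lambda>u. S `` {u}"] assms
    by (metis finite_Domain finite_Image)
qed

lemma fixpoint_free_involution_half:
  assumes "finite A" "\<forall>a\<in>A. c a \<in> A \<and> c a \<noteq> a \<and> c (c a) = a"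
  shows "\<exists>M\<subseteq>A. A \<subseteq> M \<union> c ` M \<and> 2 * card M \<le> card A"
  using assms
proof (induction A rule: finite_psubset_induct)
  case (psubset A)
  show ?case
  proof (cases "A = {}")
    case False
    then obtain a where a: "a \<in> A" by blast
    let ?B = "A - {a, c a}"
    have "c b \<in> ?B \<and> c b \<noteq> b \<and> c (c b) = b" if "b \<in> ?B" for b
    proof -
      have b: "b \<in> A" "b \<noteq> a" "b \<noteq> c a" "c (c b) = b" using psubset.prems that by auto
      have "c (c a) = a" using psubset.prems a by blast
      then have "c b \<noteq> a" "c b \<noteq> c a" using b by metis+
      then show ?thesis using psubset.prems b by blast
    qed
    then have "\<forall>b\<in>?B. c b \<in> ?B \<and> c b \<noteq> b \<and> c (c b) = b" by blast
    moreover have "?B \<subset> A" using a by auto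
    ultimately have "\<exists>M\<subseteq>?B. ?B \<subseteq> M \<union> c ` M \<and> 2 * card M \<le> card ?B"
      by (rule psubset.IH[rotated])
    then obtain M where M: "M \<subseteq> ?B" "?B \<subseteq> M \<union> c ` M" "2 * card M \<le> card ?B"
      by blast
    have "c a \<in> A" "c a \<noteq> a" using psubset.prems a by blast+
    then have "card {a, c a} = 2" "{a, c a} \<subseteq> A" using a by auto
    then have "card ?B + 2 = card A"
      using psubset.hyps card_Diff_subset[of "{a, c a}" A] card_mono[of A "{a, c a}"] by simp
    moreover have "card (insert a M) \<le> card M + 1"
      using finite_subset[OF M(1)] psubset.hyps by (simp add: card_insert_if)
    ultimately have "2 * card (insert a M) \<le> card A" using M(3) by linarith
    moreover have "A \<subseteq> insert a M \<union> c ` insert a M" using M(2) by blast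
    ultimately show ?thesis using M(1) a by (intro exI[of _ "insert a M"]) blast
  qed simp
qed

locale fin_graph =
  fixes V :: "'a set" and E :: "'a \<Rightarrow> 'a \<Rightarrow> bool"
  assumes graph: "graph V E"
begin

lemma finite_V: "finite V"
  and edge_sym: "E x y \<Longrightarrow> E y x"
  and edge_irrefl: "\<not> E x x"
  and edge_fst: "E x y \<Longrightarrow> x \<in> V"
  and edge_snd: "E x y \<Longrightarrow> y \<in> V"
  using graph unfolding graph_def by blast+

lemma induced_subgraph: "X \<subseteq> V \<Longrightarrow> fin_graph X (induced_edges E X)"
  using graph finite_subset unfolding fin_graph_def graph_def induced_edges_def by blast

lemma total_dominating_set_card_ge_2:
  assumes "total_dominating_set V E S" "V \<noteq> {}"
  shows "2 \<le> card S"
proof -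
  obtain v where "v \<in> V" using assms(2) by auto
  then obtain u where u: "u \<in> S" "E u v" using assms(1) unfolding total_dominating_set_iff by auto
  then obtain w where w: "w \<in> S" "E w u"
    using assms(1) edge_fst unfolding total_dominating_set_iff by blast
  have "finite S" using assms(1) finite_V finite_subset unfolding total_dominating_set_iff by blast
  moreover have "w \<noteq> u" using w edge_irrefl by blast
  ultimately show ?thesis using card_mono[of S "{u, w}"] u w by auto
qed

lemma connected_edge_leaving:
  assumes "connected_graph V E" "A \<subseteq> V" "x \<in> A" "y \<in> V - A"
  shows "\<exists>a\<in>A. \<exists>b\<in>V - A. E a b"
proof -
  have "E\<^sup>*\<^sup>* x y" using assms unfolding connected_graph_def by auto
  then have "y \<notin> A \<Longrightarrow> \<exists>a\<in>A. \<exists>b. b \<notin> A \<and> E a b"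
  proof (induction rule: rtranclp_induct)
    case base then show ?case using assms(3) by auto
  next
    case (step y z) then show ?case by (cases "y \<in> A") auto
  qed
  then show ?thesis using assms(4) edge_snd by blast
qed

lemma connected_nontrivial_has_neighbour:
  assumes "connected_graph V E" "nontrivial_graph V E" "x \<in> V"
  shows "\<exists>y. E x y"
proof -
  have "\<not> V \<subseteq> {x}"
    using assms(2) card_mono[of "{x}" V] unfolding nontrivial_graph_def by auto
  then obtain y where "y \<in> V - {x}" by auto
  then show ?thesis using connected_edge_leaving[OF assms(1), of "{x}" x y] assms(3) by auto
qed

lemma total_dominating_set_extend:
  assumes no_isolated: "\<forall>x\<in>V. \<exists>y. E x y" and "X \<subseteq> V" "R \<subseteq> V"
    and "V - nbhd V E X \<subseteq> R"
  shows "\<exists>T. total_dominating_set V E T \<and> card T \<le> card X + card R"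
proof -
  define g where "g r = (SOME y. E r y)" for r
  have g: "E r (g r)" if "r \<in> V" for r unfolding g_def using no_isolated that by (metis someI_ex)
  let ?T = "X \<union> g ` R"
  have "\<exists>u\<in>?T. E u v" if "v \<in> V" for v
  proof (cases "v \<in> nbhd V E X")
    case True then show ?thesis unfolding nbhd_iff by auto
  next
    case False
    then have "v \<in> R" using assms(4) that by blast
    then show ?thesis using g[OF that] edge_sym by blast
  qed
  moreover have "?T \<subseteq> V" using assms(2,3) g edge_snd by blast
  ultimately have "total_dominating_set V E ?T" unfolding total_dominating_set_iff by blast
  moreover have "card ?T \<le> card X + card R"
    using card_Un_le[of X "g ` R"] card_image_le[of R g] finite_subset[OF assms(3) finite_V] by linarith
  ultimately show ?thesis by blast
qed

lemma total_domination_number_le_twice_domination_number: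
  assumes no_isolated: "\<forall>x\<in>V. \<exists>y. E x y"
  shows "total_domination_number V E \<le> 2 * domination_number V E"
proof -
  have "dominating_set V E V" unfolding dominating_set_def by auto
  then obtain X where X: "dominating_set V E X" "card X = domination_number V E"
    by (rule domination_number_obtain)
  have "X \<subseteq> V" "V - nbhd V E X \<subseteq> X"
    using X(1) unfolding dominating_set_def nbhd_def by blast+
  then obtain T where "total_dominating_set V E T" "card T \<le> card X + card X"
    using total_dominating_set_extend[OF no_isolated] by blast
  then show ?thesis using X(2) total_domination_number_le[of V E T] by linarith
qed

lemma in_F1I:
  assumes no_isolated: "\<forall>x\<in>V. \<exists>y. E x y"
    and "dominating_set V E X" "2 * card X \<le> total_domination_number V E"
  shows "in_F1 V E"
proof -
  have "total_dominating_set V E V"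
    using no_isolated edge_sym edge_snd unfolding total_dominating_set_iff by blast
  moreover have "domination_number V E \<le> card X" using assms(2) by (rule domination_number_le)
  ultimately show ?thesis
    using assms(3) total_domination_number_le_twice_domination_number[OF no_isolated]
    unfolding in_F1_def by auto
qed

lemma domination_number_eq_1_iff:
  "domination_number V E = 1 \<longleftrightarrow> (\<exists>w\<in>V. \<forall>v\<in>V. v \<noteq> w \<longrightarrow> E w v)"
proof
  assume dn: "domination_number V E = 1"
  have "dominating_set V E V" unfolding dominating_set_def by blast
  then obtain X where "dominating_set V E X" "card X = 1"
    using domination_number_obtain dn by metis
  then obtain w where "dominating_set V E {w}" by (metis card_1_singletonE)
  then show "\<exists>w\<in>V. \<forall>v\<in>V. v \<noteq> w \<longrightarrow> E w v" unfolding dominating_set_def by blast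
next
  assume "\<exists>w\<in>V. \<forall>v\<in>V. v \<noteq> w \<longrightarrow> E w v"
  then obtain w where w: "w \<in> V" "\<forall>v\<in>V. v \<noteq> w \<longrightarrow> E w v" by blast
  then have "dominating_set V E {w}" unfolding dominating_set_def by auto
  then obtain X where X: "dominating_set V E X" "card X = domination_number V E"
    by (rule domination_number_obtain)
  have "X \<noteq> {}" "finite X"
    using X(1) w(1) finite_V finite_subset unfolding dominating_set_def by auto
  then have "card X \<noteq> 0" by simp
  then show "domination_number V E = 1"
    using X(2) domination_number_le[OF \<open>dominating_set V E {w}\<close>] by simp
qed

lemma minimum_tds_private_neighbour:
  assumes "total_dominating_set V E D" "card D = total_domination_number V E" "d \<in> D"
  shows "\<exists>z\<in>V. \<forall>u\<in>D. E u z \<longleftrightarrow> u = d"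
proof -
  have "finite D" using assms(1) finite_V finite_subset unfolding total_dominating_set_iff by blast
  then have "\<not> total_dominating_set V E (D - {d})"
    using assms(2,3) total_domination_number_le[of V E "D - {d}"] card_Diff1_less[of D d] by linarith
  then obtain z where z: "z \<in> V" "\<forall>u\<in>D - {d}. \<not> E u z"
    using assms(1) unfolding total_dominating_set_iff by blast
  moreover obtain u where "u \<in> D" "E u z" using assms(1) z(1) unfolding total_dominating_set_iff by blast
  ultimately show ?thesis by (metis Diff_iff singletonD)
qed

lemma partner_involution:
  assumes partner: "\<forall>p\<in>D. c p \<in> D \<and> (\<forall>q\<in>D. E q (c p) \<longleftrightarrow> q = p)" and "p \<in> D"
  shows "c (c p) = p" "\<forall>q\<in>D. E q p \<longleftrightarrow> q = c p"
proof -
  have "c p \<in> D" using partner assms(2) by blast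
  then have "c (c p) \<in> D" "E (c (c p)) (c p)" using partner edge_sym by blast+
  then show "c (c p) = p" using partner assms(2) by blast
  then show "\<forall>q\<in>D. E q p \<longleftrightarrow> q = c p" using partner \<open>c p \<in> D\<close> by metis
qed

lemma graph_iso_K2_iff:
  "graph_iso V E K2_V K2_E \<longleftrightarrow> (\<exists>a b. V = {a, b} \<and> a \<noteq> b \<and> E a b)"
proof
  assume "graph_iso V E K2_V K2_E"
  then obtain f :: "'a \<Rightarrow> bool" where f: "bij_betw f V UNIV" "\<forall>x\<in>V. \<forall>y\<in>V. E x y \<longleftrightarrow> f x \<noteq> f y"
    unfolding graph_iso_def K2_V_def K2_E_def by blast
  obtain a b where ab: "a \<in> V" "f a" "b \<in> V" "\<not> f b"
    using bij_betw_imp_surj_on[OF f(1)] by (metis UNIV_I imageE)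
  have "x \<in> {a, b}" if "x \<in> V" for x
    using ab that inj_onD[OF bij_betw_imp_inj_on[OF f(1)]] by (cases "f x") auto
  then have "V = {a, b}" using ab by blast
  then show "\<exists>a b. V = {a, b} \<and> a \<noteq> b \<and> E a b" using ab f(2) by blast
next
  assume "\<exists>a b. V = {a, b} \<and> a \<noteq> b \<and> E a b"
  then obtain a b where ab: "V = {a, b}" "a \<noteq> b" "E a b" by blast
  have "bij_betw (\<lambda>x. x = a) V K2_V"
    unfolding bij_betw_def inj_on_def K2_V_def using ab by auto
  moreover have "\<forall>x\<in>V. \<forall>y\<in>V. E x y \<longleftrightarrow> K2_E (x = a) (y = a)"
    unfolding K2_E_def using ab edge_sym edge_irrefl by blast
  ultimately show "graph_iso V E K2_V K2_E" unfolding graph_iso_def by blast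
qed

lemma total_domination_number_K2:
  assumes "V = {a, b}" "E a b"
  shows "total_domination_number V E = 2"
proof -
  have tds: "total_dominating_set V E V"
    using assms edge_sym unfolding total_dominating_set_iff by blast
  obtain T where "total_dominating_set V E T" "card T = total_domination_number V E"
    using total_domination_number_obtain[OF tds] by blast
  then have "2 \<le> total_domination_number V E"
    using total_dominating_set_card_ge_2 assms(1) by fastforce
  moreover have "total_domination_number V E \<le> card V" by (rule total_domination_number_le[OF tds])
  ultimately show ?thesis using assms(1) by (simp add: card_insert_if split: if_splits)
qed

lemma connected_perfect_matching_K2:
  assumes "connected_graph V E" "p \<in> V"
    and matching: "\<forall>x\<in>V. c x \<in> V \<and> (\<forall>y\<in>V. E y x \<longleftrightarrow> y = c x)"
  shows "graph_iso V E K2_V K2_E"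
proof -
  have cp: "c p \<in> V" "E (c p) p" using matching assms(2) by blast+
  have "c (c p) = p"
  proof -
    have "E p (c p)" using cp(2) by (rule edge_sym)
    then show ?thesis using matching cp(1) assms(2) by metis
  qed
  have "V = {p, c p}"
  proof (rule ccontr)
    assume "V \<noteq> {p, c p}"
    then obtain y where "y \<in> V - {p, c p}" using assms(2) cp(1) by blast
    then obtain a b where ab: "a \<in> {p, c p}" "b \<in> V - {p, c p}" "E a b"
      using connected_edge_leaving[OF assms(1), of "{p, c p}" p y] assms(2) cp(1) by blast
    have "b = c a" using matching ab edge_sym assms(2) cp(1) by blast
    then show False using ab(1,2) \<open>c (c p) = p\<close> by auto
  qed
  moreover have "E p (c p)" "p \<noteq> c p" using cp(2) edge_sym edge_irrefl by metis+
  ultimately show ?thesis unfolding graph_iso_K2_iff by blast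
qed

end

locale graph_product = G: fin_graph VG EG + H: fin_graph VH EH
  for VG :: "'a set" and EG and VH :: "'b set" and EH
begin

abbreviation prod_E :: "'a \<times> 'b \<Rightarrow> 'a \<times> 'b \<Rightarrow> bool" where
  "prod_E \<equiv> cart_edges VG EG VH EH"

definition undominated :: "('a \<times> 'b) set \<Rightarrow> 'a set" where
  "undominated S = VG - nbhd VG EG (Domain S)"

lemma prod_tds_subset: "total_dominating_set (VG \<times> VH) prod_E S \<Longrightarrow> S \<subseteq> VG \<times> VH"
  unfolding total_dominating_set_iff by blast

lemma prod_tds_dominates:
  assumes "total_dominating_set (VG \<times> VH) prod_E S" "u \<in> VG" "v \<in> VH"
  obtains a b where "(a, b) \<in> S" "a = u \<and> EH b v \<or> b = v \<and> EG a u"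
proof -
  obtain s where "s \<in> S" "prod_E s (u, v)"
    using assms unfolding total_dominating_set_iff by blast
  then show ?thesis using that by (cases s) (auto simp: cart_edges_iff)
qed

lemma undominated_fibre_tds:
  assumes S: "total_dominating_set (VG \<times> VH) prod_E S" and u: "u \<in> undominated S"
  shows "total_dominating_set VH EH (S `` {u})"
  unfolding total_dominating_set_iff
proof (intro conjI ballI)
  show "S `` {u} \<subseteq> VH" using prod_tds_subset[OF S] by blast
next
  fix v assume "v \<in> VH"
  moreover have "u \<in> VG" "\<forall>a\<in>Domain S. \<not> EG a u"
    using u unfolding undominated_def by (auto simp: nbhd_iff)
  ultimately obtain b where "(u, b) \<in> S" "EH b v"
    using prod_tds_dominates[OF S] by (metis Domain.DomainI)
  then show "\<exists>b\<in>S `` {u}. EH b v" by blast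
qed

lemma prod_tds_fibre_card:
  assumes S: "total_dominating_set (VG \<times> VH) prod_E S" and "VH \<noteq> {}" "u \<in> Domain S"
  shows "(if u \<in> undominated S then 2 else 1) \<le> card (S `` {u})"
proof -
  have "finite (S `` {u})"
    using prod_tds_subset[OF S] finite_subset[OF _ H.finite_V, of "S `` {u}"] by blast
  moreover have "S `` {u} \<noteq> {}" using assms(3) by blast
  ultimately show ?thesis
    using H.total_dominating_set_card_ge_2[OF undominated_fibre_tds[OF S] assms(2)]
    by (simp add: Suc_leI card_gt_0_iff)
qed

lemma undominated_subset_Domain:
  assumes "total_dominating_set (VG \<times> VH) prod_E S" "VH \<noteq> {}"
  shows "undominated S \<subseteq> Domain S"
proof
  fix u assume "u \<in> undominated S"
  then have "S `` {u} \<noteq> {}"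
    using H.total_dominating_set_card_ge_2[OF undominated_fibre_tds[OF assms(1)] assms(2)] by force
  then show "u \<in> Domain S" by blast
qed

lemma sum_fibre_lower_bounds:
  assumes S: "total_dominating_set (VG \<times> VH) prod_E S" and "VH \<noteq> {}"
  shows "(\<Sum>u\<in>Domain S. if u \<in> undominated S then 2 else 1)
           = card (Domain S) + card (undominated S)"
proof -
  have U: "undominated S \<subseteq> Domain S" "finite (Domain S)"
    using undominated_subset_Domain[OF assms] prod_tds_subset[OF S] G.finite_V H.finite_V
    by (auto simp: finite_Domain intro: finite_subset)
  have "(\<Sum>u\<in>Domain S. if u \<in> undominated S then 2 else 1)
      = card (Domain S - undominated S) + 2 * card (undominated S)"
    using U by (simp add: sum.If_cases Int_absorb1 Diff_eq)
  also have "\<dots> = card (Domain S) + card (undominated S)"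
    using U card_Diff_subset[OF finite_subset[OF U] U(1)] card_mono[OF U(2,1)] by simp
  finally show ?thesis .
qed

lemma card_Domain_undominated_le:
  assumes S: "total_dominating_set (VG \<times> VH) prod_E S" and "VH \<noteq> {}"
  shows "card (Domain S) + card (undominated S) \<le> card S"
proof -
  have "finite S" using prod_tds_subset[OF S] G.finite_V H.finite_V finite_subset by blast
  have "(\<Sum>u\<in>Domain S. if u \<in> undominated S then 2 else 1) \<le> (\<Sum>u\<in>Domain S. card (S `` {u}))"
    by (intro sum_mono prod_tds_fibre_card[OF assms])
  then show ?thesis
    unfolding card_eq_sum_card_Image[OF \<open>finite S\<close>] sum_fibre_lower_bounds[OF assms] .
qed

lemma tdn_le_card_Domain_undominated:
  assumes no_isolated: "\<forall>x\<in>VG. \<exists>y. EG x y"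
    and S: "total_dominating_set (VG \<times> VH) prod_E S"
  shows "total_domination_number VG EG \<le> card (Domain S) + card (undominated S)"
proof -
  have "Domain S \<subseteq> VG" using prod_tds_subset[OF S] by blast
  then obtain T where "total_dominating_set VG EG T" "card T \<le> card (Domain S) + card (undominated S)"
    using G.total_dominating_set_extend[OF no_isolated, of "Domain S" "undominated S"]
    unfolding undominated_def by blast
  then show ?thesis using total_domination_number_le[of VG EG T] by linarith
qed

lemma prod_tds_exists:
  assumes no_isolated: "\<forall>x\<in>VG. \<exists>y. EG x y"
  shows "total_dominating_set (VG \<times> VH) prod_E (VG \<times> VH)"
  unfolding total_dominating_set_iff
proof (intro conjI ballI)
  fix x assume "x \<in> VG \<times> VH"
  then obtain u v where uv: "x = (u, v)" "u \<in> VG" "v \<in> VH" by blast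
  then obtain y where "EG y u" using no_isolated G.edge_sym by blast
  then show "\<exists>s\<in>VG \<times> VH. prod_E s x" using uv G.edge_fst by (auto simp: cart_edges_iff)
qed simp

lemma tdn_le_tdn_prod:
  assumes no_isolated: "\<forall>x\<in>VG. \<exists>y. EG x y" and "VH \<noteq> {}"
  shows "total_domination_number VG EG \<le> total_domination_number (VG \<times> VH) prod_E"
proof -
  obtain S where S: "total_dominating_set (VG \<times> VH) prod_E S"
    "card S = total_domination_number (VG \<times> VH) prod_E"
    using total_domination_number_obtain[OF prod_tds_exists[OF no_isolated]] by blast
  show ?thesis
    using tdn_le_card_Domain_undominated[OF no_isolated S(1)]
      card_Domain_undominated_le[OF S(1) assms(2)] S(2) by linarith
qed

lemma tight_prod_tds:
  assumes no_isolated: "\<forall>x\<in>VG. \<exists>y. EG x y" and "VH \<noteq> {}"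
    and S: "total_dominating_set (VG \<times> VH) prod_E S"
    and tight: "card S = total_domination_number VG EG"
  shows "card (Domain S) + card (undominated S) = total_domination_number VG EG"
    and "u \<in> Domain S \<Longrightarrow> card (S `` {u}) = (if u \<in> undominated S then 2 else 1)"
proof -
  show eq: "card (Domain S) + card (undominated S) = total_domination_number VG EG"
    using tdn_le_card_Domain_undominated[OF no_isolated S]
      card_Domain_undominated_le[OF S assms(2)] tight by linarith
  have fin: "finite S" using prod_tds_subset[OF S] G.finite_V H.finite_V finite_subset by blast
  have sums: "(\<Sum>u\<in>Domain S. if u \<in> undominated S then 2 else 1) = (\<Sum>u\<in>Domain S. card (S `` {u}))"
    unfolding sum_fibre_lower_bounds[OF S assms(2)] card_eq_sum_card_Image[OF fin, symmetric]
    using eq tight by simp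
  assume "u \<in> Domain S"
  from sum_mono_inv[OF sums prod_tds_fibre_card[OF S assms(2)] this] fin
  show "card (S `` {u}) = (if u \<in> undominated S then 2 else 1)"
    by (simp add: finite_Domain)
qed

text \<open>A vertex dominated by \<open>u\<close> alone would force all of \<open>VH\<close> into the fibre \<open>S `` {u}\<close>,
  which has only two elements.\<close>
lemma tight_large_cover:
  assumes no_isolated: "\<forall>x\<in>VG. \<exists>y. EG x y" and large: "3 \<le> card VH"
    and S: "total_dominating_set (VG \<times> VH) prod_E S"
    and tight: "card S = total_domination_number VG EG"
    and u: "u \<in> undominated S"
  shows "VG - nbhd VG EG (Domain S - {u}) \<subseteq> undominated S"
proof
  have VH: "VH \<noteq> {}" using large by auto
  have uP: "u \<in> Domain S" and u_undom: "\<forall>a\<in>Domain S. \<not> EG a u"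
    using u undominated_subset_Domain[OF S VH] unfolding undominated_def by (auto simp: nbhd_iff)
  fix z assume z: "z \<in> VG - nbhd VG EG (Domain S - {u})"
  show "z \<in> undominated S"
  proof (rule ccontr)
    assume "z \<notin> undominated S"
    then have "EG u z" using z unfolding undominated_def by (auto simp: nbhd_iff)
    then have "z \<notin> Domain S" using u_undom G.edge_sym by blast
    have fibre: "VH \<subseteq> S `` {u}"
    proof
      fix v assume "v \<in> VH"
      then obtain a b where "(a, b) \<in> S" "a = z \<and> EH b v \<or> b = v \<and> EG a z"
        using prod_tds_dominates[OF S] z by blast
      moreover from this have "a = u" using z \<open>z \<notin> Domain S\<close> by (auto simp: nbhd_iff)
      ultimately show "v \<in> S `` {u}" using \<open>z \<notin> Domain S\<close> by blast
    qed
    have "finite (S `` {u})"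
      using prod_tds_subset[OF S] finite_subset[OF _ H.finite_V, of "S `` {u}"] by blast
    then have "card VH \<le> 2"
      using card_mono[OF _ fibre] tight_prod_tds(2)[OF no_isolated VH S tight uP] u by simp
    then show False using large by simp
  qed
qed

lemma tight_large_undominated_empty:
  assumes no_isolated: "\<forall>x\<in>VG. \<exists>y. EG x y" and large: "3 \<le> card VH"
    and S: "total_dominating_set (VG \<times> VH) prod_E S"
    and tight: "card S = total_domination_number VG EG"
  shows "undominated S = {}"
proof (rule ccontr)
  assume "undominated S \<noteq> {}"
  then obtain u where u: "u \<in> undominated S" by blast
  have VH: "VH \<noteq> {}" using large by auto
  have PV: "Domain S \<subseteq> VG" using prod_tds_subset[OF S] by blast
  obtain T where T: "total_dominating_set VG EG T" "card T \<le> card (Domain S - {u}) + card (undominated S)"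
    using G.total_dominating_set_extend[OF no_isolated _ _ tight_large_cover[OF assms u]] PV
    unfolding undominated_def by blast
  have "finite (Domain S)" using PV G.finite_V finite_subset by blast
  moreover have "u \<in> Domain S" using u undominated_subset_Domain[OF S VH] by blast
  ultimately have "card T < total_domination_number VG EG"
    using T(2) tight_prod_tds(1)[OF no_isolated VH S tight] card_Diff1_less by fastforce
  then show False using total_domination_number_le[OF T(1)] by simp
qed

end

text \<open>Describes a total dominating set \<open>{(p, f p) | p \<in> P}\<close> of \<open>G \<box> H\<close> of size \<open>\<gamma>\<^sub>t(G)\<close>;
  \<open>dominates\<close> spells out that it dominates every \<open>(z, v)\<close>.\<close>
locale tight_section = graph_product +
  fixes P :: "'a set" and f :: "'a \<Rightarrow> 'b"
  assumes P_tds: "total_dominating_set VG EG P"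
    and card_P: "card P = total_domination_number VG EG"
    and f_into: "\<forall>p\<in>P. f p \<in> VH"
    and dominates: "\<forall>z\<in>VG. \<forall>v\<in>VH. (z \<in> P \<and> EH (f z) v) \<or> (\<exists>p\<in>P. EG p z \<and> f p = v)"
    and large: "3 \<le> card VH"
begin

lemma P_subset: "P \<subseteq> VG" and finite_P: "finite P"
  using P_tds G.finite_V finite_subset unfolding total_dominating_set_iff by blast+

lemma vertex_avoiding: "\<exists>v\<in>VH. v \<noteq> a \<and> v \<noteq> b"
proof -
  have "card {a, b} \<le> 2" by (simp add: card_insert_if)
  then have "card {a, b} < card VH" using large by linarith
  then have "\<not> VH \<subseteq> {a, b}" using card_mono[of "{a, b}" VH] by auto
  then show ?thesis by blast
qed

text \<open>The private neighbour \<open>z\<close> of \<open>p\<close> lies in \<open>P\<close>, since otherwise \<open>(z, v\<^sub>1)\<close> and \<open>(z, v\<^sub>2)\<close>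
  would both have to be dominated by \<open>(p, f p)\<close>. Then \<open>(z, f z)\<close> forces \<open>f z = f p\<close>, and every
  other \<open>(z, v)\<close> is dominated inside the fibre \<open>{z} \<times> VH\<close>.\<close>
lemma private_partner:
  assumes "p \<in> P"
  shows "\<exists>z\<in>P. (\<forall>q\<in>P. EG q z \<longleftrightarrow> q = p) \<and> f z = f p \<and> (\<forall>v\<in>VH. v \<noteq> f p \<longrightarrow> EH (f p) v)"
proof -
  obtain z where z: "z \<in> VG" and only_p: "\<forall>q\<in>P. EG q z \<longleftrightarrow> q = p"
    using G.minimum_tds_private_neighbour[OF P_tds card_P assms] by blast
  obtain v1 v2 where v: "v1 \<in> VH" "v2 \<in> VH" "v1 \<noteq> v2" using vertex_avoiding by metis
  have "z \<in> P"
  proof (rule ccontr)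
    assume "z \<notin> P"
    have fp: "f p = v" if "v \<in> VH" for v
    proof -
      have "(z \<in> P \<and> EH (f z) v) \<or> (\<exists>q\<in>P. EG q z \<and> f q = v)" using dominates z that by blast
      then obtain q where "q \<in> P" "EG q z" "f q = v" using \<open>z \<notin> P\<close> by blast
      then show ?thesis using only_p by metis
    qed
    then show False using fp[OF v(1)] fp[OF v(2)] v(3) by simp
  qed
  have "(z \<in> P \<and> EH (f z) (f z)) \<or> (\<exists>q\<in>P. EG q z \<and> f q = f z)"
    using dominates z f_into \<open>z \<in> P\<close> by blast
  then have "f z = f p" using H.edge_irrefl only_p by metis
  moreover have "EH (f p) v" if "v \<in> VH" "v \<noteq> f p" for v
  proof -
    have "(z \<in> P \<and> EH (f z) v) \<or> (\<exists>q\<in>P. EG q z \<and> f q = v)" using dominates z that by blast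
    then show ?thesis using only_p that(2) \<open>f z = f p\<close> by metis
  qed
  ultimately show ?thesis using \<open>z \<in> P\<close> only_p by blast
qed

definition partner :: "'a \<Rightarrow> 'a" where
  "partner p = (SOME z. z \<in> P \<and> (\<forall>q\<in>P. EG q z \<longleftrightarrow> q = p) \<and> f z = f p)"

lemma partner: "\<forall>p\<in>P. partner p \<in> P \<and> (\<forall>q\<in>P. EG q (partner p) \<longleftrightarrow> q = p) \<and> f (partner p) = f p"
proof
  fix p assume "p \<in> P"
  then have "\<exists>z. z \<in> P \<and> (\<forall>q\<in>P. EG q z \<longleftrightarrow> q = p) \<and> f z = f p"
    using private_partner by blast
  then show "partner p \<in> P \<and> (\<forall>q\<in>P. EG q (partner p) \<longleftrightarrow> q = p) \<and> f (partner p) = f p"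
    unfolding partner_def by (rule someI_ex)
qed

lemma partner_partner: "p \<in> P \<Longrightarrow> partner (partner p) = p"
  and neighbours_in_P: "p \<in> P \<Longrightarrow> \<forall>q\<in>P. EG q p \<longleftrightarrow> q = partner p"
  using G.partner_involution[of P partner p] partner by blast+

lemma partner_eq_iff: "p \<in> P \<Longrightarrow> q \<in> P \<Longrightarrow> partner p = partner q \<longleftrightarrow> p = q"
  using partner_partner by metis

text \<open>To dominate \<open>(y, v\<^sub>1)\<close> and \<open>(y, v\<^sub>2)\<close>, a vertex \<open>y \<notin> P\<close> has neighbours \<open>p\<^sub>1, p\<^sub>2 \<in> P\<close>
  with \<open>f p\<^sub>i = v\<^sub>i\<close>. Exchanging their partners for \<open>y\<close> gives a smaller total dominating set
  of \<open>G\<close>; the third value \<open>v\<^sub>3\<close> shows that no vertex outside \<open>P\<close> depends on those partners.\<close>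
lemma partner_exchange_tds:
  assumes y: "y \<in> VG" "y \<notin> P" and p1: "p1 \<in> P" "EG p1 y" and p2: "p2 \<in> P" "EG p2 y"
    and "f p1 \<noteq> f p2"
  shows "total_dominating_set VG EG (P - {partner p1, partner p2} \<union> {y})"
proof -
  let ?T = "P - {partner p1, partner p2} \<union> {y}"
  have f_partner: "f (partner p) = f p" and partner_in: "partner p \<in> P" if "p \<in> P" for p
    using partner that by blast+
  have "\<exists>u\<in>?T. EG u x" if x: "x \<in> VG" for x
  proof (cases "x \<in> P")
    case True
    show ?thesis
    proof (cases "x \<in> {p1, p2}")
      case True
      then show ?thesis using p1 p2 G.edge_sym by blast
    next
      case False
      then have "partner x \<in> P - {partner p1, partner p2}"
        using \<open>x \<in> P\<close> p1(1) p2(1) partner_in partner_eq_iff by blast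
      then show ?thesis using neighbours_in_P[OF \<open>x \<in> P\<close>] by blast
    qed
  next
    case False
    obtain p where p: "p \<in> P" "EG p x" "f p \<notin> {f p1, f p2} \<or> p = p1"
    proof (cases "x = y")
      case True then show ?thesis using that[of p1] p1 by blast
    next
      case False
      obtain v where "v \<in> VH" "v \<noteq> f p1" "v \<noteq> f p2" using vertex_avoiding by blast
      then obtain p3 where "p3 \<in> P" "EG p3 x" "f p3 = v" using dominates x \<open>x \<notin> P\<close> by blast
      then show ?thesis using that[of p3] \<open>v \<noteq> f p1\<close> \<open>v \<noteq> f p2\<close> by blast
    qed
    have "p1 \<noteq> partner p1" using neighbours_in_P[OF p1(1)] partner_in[OF p1(1)] G.edge_irrefl by metis
    then have "p \<noteq> partner p1" "p \<noteq> partner p2"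
      using p f_partner[OF p1(1)] f_partner[OF p2(1)] assms(7) by auto
    then show ?thesis using p by blast
  qed
  moreover have "?T \<subseteq> VG" using P_subset y by blast
  ultimately show ?thesis unfolding total_dominating_set_iff by blast
qed

lemma vertices_eq_P: "VG = P"
proof (rule ccontr)
  assume "VG \<noteq> P"
  then obtain y where y: "y \<in> VG" "y \<notin> P" using P_subset by blast
  obtain v1 v2 where v: "v1 \<in> VH" "v2 \<in> VH" "v1 \<noteq> v2" using vertex_avoiding by metis
  obtain p1 p2 where p1: "p1 \<in> P" "EG p1 y" "f p1 = v1" and p2: "p2 \<in> P" "EG p2 y" "f p2 = v2"
    using dominates y v by blast
  let ?T = "P - {partner p1, partner p2} \<union> {y}"
  have partners: "{partner p1, partner p2} \<subseteq> P" "partner p1 \<noteq> partner p2"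
    using partner_eq_iff partner p1 p2 v(3) by auto
  then have "card (P - {partner p1, partner p2}) + 2 = card P"
    using finite_P card_Diff_subset[of "{partner p1, partner p2}" P] card_mono[OF finite_P partners(1)]
    by simp
  then have "card ?T < total_domination_number VG EG"
    using card_Un_le[of "P - {partner p1, partner p2}" "{y}"] card_P by simp
  moreover have "total_dominating_set VG EG ?T"
    using partner_exchange_tds[OF y p1(1,2) p2(1,2)] p1(3) p2(3) v(3) by simp
  ultimately show False using total_domination_number_le by fastforce
qed

lemma K2_and_domination_number_1:
  assumes "connected_graph VG EG" "P \<noteq> {}"
  shows "graph_iso VG EG K2_V K2_E \<and> domination_number VH EH = 1"
proof -
  obtain p where "p \<in> P" using assms(2) by blast
  then have "graph_iso VG EG K2_V K2_E"
    using G.connected_perfect_matching_K2[OF assms(1), of p partner] vertices_eq_P partner neighbours_in_P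
    by blast
  moreover have "domination_number VH EH = 1"
    unfolding H.domination_number_eq_1_iff using f_into private_partner \<open>p \<in> P\<close> by blast
  ultimately show ?thesis ..
qed

end

lemma (in graph_product) tight_large_factor:
  assumes "connected_graph VG EG" "VG \<noteq> {}" and no_isolated: "\<forall>x\<in>VG. \<exists>y. EG x y"
    and large: "3 \<le> card VH"
    and S: "total_dominating_set (VG \<times> VH) prod_E S"
    and tight: "card S = total_domination_number VG EG"
  shows "graph_iso VG EG K2_V K2_E \<and> domination_number VH EH = 1"
proof -
  let ?P = "Domain S"
  define f where "f u = the_elem (S `` {u})" for u
  have VH: "VH \<noteq> {}" using large by auto
  have U: "undominated S = {}" by (rule tight_large_undominated_empty[OF no_isolated large S tight])
  have "S `` {u} = {f u}" if "u \<in> ?P" for u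
  proof -
    have "card (S `` {u}) = 1" using tight_prod_tds(2)[OF no_isolated VH S tight that] U by simp
    then show ?thesis unfolding f_def by (metis card_1_singletonE the_elem_eq)
  qed
  then have S_eq: "(u, v) \<in> S \<longleftrightarrow> u \<in> ?P \<and> v = f u" for u v by blast
  interpret tight_section VG EG VH EH ?P f
  proof
    show "total_dominating_set VG EG ?P"
      using U prod_tds_subset[OF S] unfolding undominated_def total_dominating_set_def nbhd_def by blast
    show "card ?P = total_domination_number VG EG"
      using tight_prod_tds(1)[OF no_isolated VH S tight] U by simp
    show "\<forall>p\<in>?P. f p \<in> VH" using S_eq[of _ "f _"] prod_tds_subset[OF S] by (simp add: subset_iff)
    show "\<forall>z\<in>VG. \<forall>v\<in>VH. z \<in> ?P \<and> EH (f z) v \<or> (\<exists>p\<in>?P. EG p z \<and> f p = v)"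
    proof (intro ballI)
      fix z v assume "z \<in> VG" "v \<in> VH"
      then obtain a b where "(a, b) \<in> S" "a = z \<and> EH b v \<or> b = v \<and> EG a z"
        by (rule prod_tds_dominates[OF S])
      then show "z \<in> ?P \<and> EH (f z) v \<or> (\<exists>p\<in>?P. EG p z \<and> f p = v)"
        unfolding S_eq by blast
    qed
  qed (rule large)
  obtain x where "x \<in> VG" using assms(2) by blast
  then have "?P \<noteq> {}" using P_tds unfolding total_dominating_set_iff by blast
  then show ?thesis by (rule K2_and_domination_number_1[OF assms(1)])
qed

text \<open>The two layers \<open>A\<^sub>1 \<times> {h\<^sub>1}\<close>, \<open>A\<^sub>2 \<times> {h\<^sub>2}\<close> of a total dominating set of \<open>G \<box> K\<^sub>2\<close> of size
  \<open>\<gamma>\<^sub>t(G)\<close>. Vertices in both layers (\<open>W\<close>) are undominated by \<open>A\<^sub>1 \<union> A\<^sub>2\<close> and dominate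
  \<open>V\<^sub>1\<close>; the rest \<open>D = D\<^sub>1 \<union> D\<^sub>2\<close> is a minimum total dominating set of \<open>V\<^sub>2 = V - V\<^sub>1\<close> in which
  each vertex is matched with a partner on its own side.\<close>
locale tight_layers = fin_graph +
  fixes A1 A2 :: "'a set"
  assumes no_isolated: "\<forall>x\<in>V. \<exists>y. E x y"
    and A1_subset: "A1 \<subseteq> V" and A2_subset: "A2 \<subseteq> V"
    and covers1: "\<forall>u\<in>V. u \<in> A2 \<or> (\<exists>a\<in>A1. E a u)"
    and covers2: "\<forall>u\<in>V. u \<in> A1 \<or> (\<exists>a\<in>A2. E a u)"
    and tdn_eq: "total_domination_number V E = card A1 + card A2"
begin

definition W :: "'a set" where "W = A1 \<inter> A2"
definition D1 :: "'a set" where "D1 = A1 - A2"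
definition D2 :: "'a set" where "D2 = A2 - A1"
definition D :: "'a set" where "D = D1 \<union> D2"
definition V1 :: "'a set" where "V1 = W \<union> nbhd V E W"
definition V2 :: "'a set" where "V2 = V - V1"

lemma finite_A: "finite A1" "finite A2"
  using A1_subset A2_subset finite_V finite_subset by blast+

lemma D1_D2_disjoint: "D1 \<inter> D2 = {}"
  unfolding D1_def D2_def by blast

lemma tdn_eq_D_W: "total_domination_number V E = card D + 2 * card W"
proof -
  have "A1 = D1 \<union> W" "A2 = D2 \<union> W" "D1 \<inter> W = {}" "D2 \<inter> W = {}"
    unfolding D1_def D2_def W_def by blast+
  then have "card A1 = card D1 + card W" "card A2 = card D2 + card W"
    using finite_A card_Un_disjoint by (metis finite_Un)+
  moreover have "card D = card D1 + card D2"
    unfolding D_def using D1_D2_disjoint finite_A card_Un_disjoint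
    by (metis D1_def D2_def finite_Diff)
  ultimately show ?thesis using tdn_eq by simp
qed

lemma undominated_eq_W: "V - nbhd V E (A1 \<union> A2) = W"
proof -
  have sub: "V - nbhd V E (A1 \<union> A2) \<subseteq> W"
    using covers1 covers2 unfolding W_def by (auto simp: nbhd_iff)
  have "A1 \<union> A2 \<subseteq> V" "W \<subseteq> V" using A1_subset A2_subset unfolding W_def by blast+
  then obtain T where T: "total_dominating_set V E T"
      "card T \<le> card (A1 \<union> A2) + card (V - nbhd V E (A1 \<union> A2))"
    using total_dominating_set_extend[OF no_isolated, of "A1 \<union> A2"] by blast
  have "card (A1 \<union> A2) + card W = card A1 + card A2"
    unfolding W_def using card_Un_Int[OF finite_A] by simp
  then have "card W \<le> card (V - nbhd V E (A1 \<union> A2))"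
    using total_domination_number_le[OF T(1)] T(2) tdn_eq by linarith
  moreover have "finite W" using finite_A unfolding W_def by blast
  ultimately show ?thesis using card_seteq[OF _ sub] by blast
qed

lemma W_undominated:
  assumes "w \<in> W" "p \<in> A1 \<union> A2"
  shows "\<not> E p w"
proof -
  have "w \<in> V - nbhd V E (A1 \<union> A2)" using assms(1) undominated_eq_W by simp
  then show ?thesis using assms(2) by (auto simp: nbhd_iff)
qed

lemma W_subset: "W \<subseteq> V1" and V1_subset: "V1 \<subseteq> V" and V1_V2: "V1 \<union> V2 = V"
  using A1_subset unfolding W_def V1_def V2_def nbhd_def by blast+

lemma D_subset: "D \<subseteq> V2"
proof
  fix p assume p: "p \<in> D"
  then have "p \<in> A1 \<union> A2" "p \<notin> W" "p \<in> V" 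
    using A1_subset A2_subset unfolding D_def D1_def D2_def W_def by blast+
  moreover have "p \<notin> nbhd V E W" using W_undominated edge_sym \<open>p \<in> A1 \<union> A2\<close> by (auto simp: nbhd_iff)
  ultimately show "p \<in> V2" unfolding V2_def V1_def by blast
qed

lemma V2_not_adjacent_W: "u \<in> V2 \<Longrightarrow> w \<in> W \<Longrightarrow> \<not> E w u"
  unfolding V2_def V1_def using edge_snd by (auto simp: nbhd_iff)

lemma covers1_V2: "u \<in> V2 \<Longrightarrow> u \<in> D2 \<or> (\<exists>a\<in>D1. E a u)"
  and covers2_V2: "u \<in> V2 \<Longrightarrow> u \<in> D1 \<or> (\<exists>a\<in>D2. E a u)"
proof -
  assume u: "u \<in> V2"
  then have "u \<in> V" "u \<notin> W" unfolding V2_def V1_def by blast+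
  moreover have "a \<notin> W" if "E a u" for a using V2_not_adjacent_W[OF u] that by blast
  ultimately show "u \<in> D2 \<or> (\<exists>a\<in>D1. E a u)" "u \<in> D1 \<or> (\<exists>a\<in>D2. E a u)"
    using covers1 covers2 unfolding D1_def D2_def W_def by blast+
qed

lemma D_tds_V2: "total_dominating_set V2 (induced_edges E V2) D"
  unfolding total_dominating_set_induced_iff
  using D_subset covers1_V2 covers2_V2 D1_D2_disjoint unfolding D_def by blast

lemma no_isolated_V1: "\<forall>x\<in>V1. \<exists>y. induced_edges E V1 x y"
proof
  fix x assume x: "x \<in> V1"
  show "\<exists>y. induced_edges E V1 x y"
  proof (cases "x \<in> W")
    case True
    then obtain y where "E x y" using no_isolated V1_subset W_subset by blast
    then have "y \<in> V1" using True edge_snd unfolding V1_def by (auto simp: nbhd_iff)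
    then show ?thesis using \<open>E x y\<close> x unfolding induced_edges_def by blast
  next
    case False
    then obtain w where "w \<in> W" "E w x" using x unfolding V1_def by (auto simp: nbhd_iff)
    then show ?thesis using x edge_sym W_subset unfolding induced_edges_def by blast
  qed
qed

lemma W_dominating_V1: "dominating_set V1 (induced_edges E V1) W"
  using W_subset unfolding dominating_set_def V1_def induced_edges_def by (auto simp: nbhd_iff)

lemma V1_graph: "fin_graph V1 (induced_edges E V1)"
  and V2_graph: "fin_graph V2 (induced_edges E V2)"
  using induced_subgraph V1_subset unfolding V2_def by blast+

lemma small_tds_V1: "\<exists>X. total_dominating_set V1 (induced_edges E V1) X \<and> card X \<le> 2 * card W"
proof -
  have "V1 - nbhd V1 (induced_edges E V1) W \<subseteq> W"
    using W_subset unfolding V1_def by (auto simp: nbhd_iff nbhd_induced_iff induced_edges_def)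
  then show ?thesis
    using fin_graph.total_dominating_set_extend[OF V1_graph no_isolated_V1 W_subset W_subset] by auto
qed

lemma tds_Un_card_ge:
  assumes "total_dominating_set V1 (induced_edges E V1) X" "total_dominating_set V2 (induced_edges E V2) Y"
  shows "card D + 2 * card W \<le> card X + card Y"
  using total_domination_number_le[OF total_dominating_set_Un[OF assms, unfolded V1_V2]]
    card_Un_le[of X Y] tdn_eq_D_W by linarith

lemma tdn_V1: "total_domination_number V1 (induced_edges E V1) = 2 * card W"
  and tdn_V2: "total_domination_number V2 (induced_edges E V2) = card D"
proof -
  obtain X where X: "total_dominating_set V1 (induced_edges E V1) X" "card X \<le> 2 * card W"
    using small_tds_V1 by blast
  obtain X' where X': "total_dominating_set V1 (induced_edges E V1) X'"
      "card X' = total_domination_number V1 (induced_edges E V1)"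
    using total_domination_number_obtain[OF X(1)] by blast
  obtain Y where Y: "total_dominating_set V2 (induced_edges E V2) Y"
      "card Y = total_domination_number V2 (induced_edges E V2)"
    using total_domination_number_obtain[OF D_tds_V2] by blast
  show "total_domination_number V1 (induced_edges E V1) = 2 * card W"
    using tds_Un_card_ge[OF X'(1) D_tds_V2] total_domination_number_le[OF X(1)] X(2) X'(2) by linarith
  show "total_domination_number V2 (induced_edges E V2) = card D"
    using tds_Un_card_ge[OF X(1) Y(1)] total_domination_number_le[OF D_tds_V2] X(2) Y(2) by linarith
qed

lemma in_F1_V1: "in_F1 V1 (induced_edges E V1)"
  using fin_graph.in_F1I[OF V1_graph no_isolated_V1 W_dominating_V1] tdn_V1 by simp

lemma D_private_neighbour:
  assumes "d \<in> D"
  shows "\<exists>z\<in>V2. \<forall>u\<in>D. E u z \<longleftrightarrow> u = d"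
proof -
  obtain z where "z \<in> V2" "\<forall>u\<in>D. induced_edges E V2 u z \<longleftrightarrow> u = d"
    using fin_graph.minimum_tds_private_neighbour[OF V2_graph D_tds_V2 tdn_V2[symmetric] assms] by blast
  then show ?thesis using D_subset unfolding induced_edges_def by blast
qed

definition mate :: "'a \<Rightarrow> 'a" where
  "mate d = (SOME z. z \<in> V2 \<and> (\<forall>u\<in>D. E u z \<longleftrightarrow> u = d))"

lemma mate: "d \<in> D \<Longrightarrow> mate d \<in> V2 \<and> (\<forall>u\<in>D. E u (mate d) \<longleftrightarrow> u = d)"
  unfolding mate_def by (rule someI_ex) (use D_private_neighbour in blast)

text \<open>By \<open>covers1_V2\<close> and \<open>covers2_V2\<close> the private neighbour of \<open>d \<in> D\<^sub>i\<close> lies in \<open>D\<^sub>i\<close> or is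
  dominated from the other side, which would give it a second dominator in \<open>D\<close>.\<close>
lemma mate_same_side: "d \<in> D1 \<Longrightarrow> mate d \<in> D1" "d \<in> D2 \<Longrightarrow> mate d \<in> D2"
proof -
  have other_side: "a = d" if "d \<in> D" "a \<in> D" "E a (mate d)" for a d
    using mate[OF that(1)] that(2,3) by blast
  show "d \<in> D1 \<Longrightarrow> mate d \<in> D1"
  proof -
    assume d: "d \<in> D1"
    then have "d \<in> D" unfolding D_def by blast
    then have "\<not> (\<exists>a\<in>D2. E a (mate d))" using other_side d D1_D2_disjoint unfolding D_def by blast
    then show ?thesis using covers2_V2 mate \<open>d \<in> D\<close> by blast
  qed
  show "d \<in> D2 \<Longrightarrow> mate d \<in> D2"
  proof -
    assume d: "d \<in> D2"
    then have "d \<in> D" unfolding D_def by blast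
    then have "\<not> (\<exists>a\<in>D1. E a (mate d))" using other_side d D1_D2_disjoint unfolding D_def by blast
    then show ?thesis using covers1_V2 mate \<open>d \<in> D\<close> by blast
  qed
qed

lemma mate_in_D: "\<forall>d\<in>D. mate d \<in> D \<and> (\<forall>u\<in>D. E u (mate d) \<longleftrightarrow> u = d)"
  using mate mate_same_side unfolding D_def by blast

lemma mate_mate: "d \<in> D \<Longrightarrow> mate (mate d) = d"
  and neighbours_in_D: "d \<in> D \<Longrightarrow> \<forall>u\<in>D. E u d \<longleftrightarrow> u = mate d"
  using partner_involution[OF mate_in_D] by blast+

lemma no_edge_D1_D2:
  assumes "d \<in> D1" "u \<in> D2"
  shows "\<not> E u d"
proof
  assume "E u d"
  moreover have "d \<in> D" "u \<in> D" using assms unfolding D_def by blast+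
  ultimately have "u = mate d" using neighbours_in_D by blast
  then show False using mate_same_side(1)[OF assms(1)] assms(2) D1_D2_disjoint by blast
qed

lemma in_F2_V2:
  assumes "D1 \<noteq> {}" "D2 \<noteq> {}"
  shows "in_F2 V2 (induced_edges E V2)"
  unfolding in_F2_def
proof (intro exI conjI)
  show "D1 = V2 - nbhd V2 (induced_edges E V2) D2"
  proof
    show "D1 \<subseteq> V2 - nbhd V2 (induced_edges E V2) D2"
      using D_subset no_edge_D1_D2 unfolding D_def by (auto simp: nbhd_induced_iff)
    show "V2 - nbhd V2 (induced_edges E V2) D2 \<subseteq> D1"
    proof
      fix x assume "x \<in> V2 - nbhd V2 (induced_edges E V2) D2"
      moreover have "D2 \<subseteq> V2" using D_subset unfolding D_def by blast
      ultimately show "x \<in> D1" using covers2_V2[of x] by (auto simp: nbhd_induced_iff)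
    qed
  qed
  show "D2 = V2 - nbhd V2 (induced_edges E V2) D1"
  proof
    show "D2 \<subseteq> V2 - nbhd V2 (induced_edges E V2) D1"
      using D_subset no_edge_D1_D2 edge_sym unfolding D_def by (auto simp: nbhd_induced_iff) blast
    show "V2 - nbhd V2 (induced_edges E V2) D1 \<subseteq> D2"
    proof
      fix x assume "x \<in> V2 - nbhd V2 (induced_edges E V2) D1"
      moreover have "D1 \<subseteq> V2" using D_subset unfolding D_def by blast
      ultimately show "x \<in> D2" using covers1_V2[of x] by (auto simp: nbhd_induced_iff)
    qed
  qed
qed (use assms D_tds_V2 tdn_V2 D1_D2_disjoint in \<open>auto simp: D_def\<close>)

text \<open>If one side of \<open>D\<close> is empty, \<open>D = V\<^sub>2\<close> is perfectly matched by \<open>mate\<close>, so half of it together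
  with \<open>W\<close> dominates \<open>G\<close>; hence \<open>\<gamma>(G) \<le> |W| + |D|/2 = \<gamma>\<^sub>t(G)/2\<close>.\<close>
lemma in_F1_degenerate:
  assumes "D1 = {} \<or> D2 = {}"
  shows "in_F1 V E"
proof -
  have "V2 \<subseteq> D" using assms covers1_V2 covers2_V2 unfolding D_def by blast
  then have V2_eq: "V2 = D" using D_subset by blast
  have "mate d \<noteq> d" if "d \<in> D" for d
    using mate_in_D that edge_irrefl by metis
  then have "\<forall>d\<in>D. mate d \<in> D \<and> mate d \<noteq> d \<and> mate (mate d) = d"
    using mate_in_D mate_mate by blast
  moreover have "finite D" using D_subset finite_V finite_subset unfolding V2_def by blast
  ultimately have "\<exists>M\<subseteq>D. D \<subseteq> M \<union> mate ` M \<and> 2 * card M \<le> card D"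
    by (intro fixpoint_free_involution_half)
  then obtain M where M: "M \<subseteq> D" "D \<subseteq> M \<union> mate ` M" "2 * card M \<le> card D"
    by blast
  have "dominating_set V E (W \<union> M)"
    unfolding dominating_set_def
  proof (intro conjI ballI)
    show "W \<union> M \<subseteq> V" using W_subset V1_subset M(1) D_subset unfolding V2_def by blast
  next
    fix v assume "v \<in> V"
    show "v \<in> W \<union> M \<or> (\<exists>u\<in>W \<union> M. E u v)"
    proof (cases "v \<in> V1")
      case True then show ?thesis unfolding V1_def by (auto simp: nbhd_iff)
    next
      case False
      then have "v \<in> M \<union> mate ` M" using \<open>v \<in> V\<close> M(2) V2_eq unfolding V2_def by blast
      then show ?thesis using mate_in_D M(1) by blast
    qed
  qed
  moreover have "2 * card (W \<union> M) \<le> total_domination_number V E"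
    using card_Un_le[of W M] M(3) tdn_eq_D_W by linarith
  ultimately show ?thesis by (rule in_F1I[OF no_isolated])
qed

lemma in_F1_F2_F3: "in_F1 V E \<or> in_F2 V E \<or> in_F3 V E"
proof -
  have induced_V: "induced_edges E V = E" by (rule graph_induced_edges_self[OF graph])
  consider "V2 = {}" | "D1 = {} \<or> D2 = {}" | "W = {}" "D1 \<noteq> {}" "D2 \<noteq> {}"
    | "V2 \<noteq> {}" "W \<noteq> {}" "D1 \<noteq> {}" "D2 \<noteq> {}" by blast
  then show ?thesis
  proof cases
    case 1
    then have "V1 = V" using V1_V2 by simp
    then show ?thesis using in_F1_V1 induced_V by simp
  next
    case 2
    then show ?thesis using in_F1_degenerate by blast
  next
    case 3
    then have "V2 = V" unfolding V2_def V1_def nbhd_def by simp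
    then show ?thesis using in_F2_V2[OF 3(2,3)] induced_V by simp
  next
    case 4
    have "V1 \<noteq> {}" "V1 \<inter> V2 = {}" using 4(2) W_subset unfolding V2_def by blast+
    then have "in_F3 V E"
      unfolding in_F3_def using 4 V1_V2 in_F1_V1 in_F2_V2 tdn_V1 tdn_V2 tdn_eq_D_W
      by (intro exI[of _ V1] exI[of _ V2]) auto
    then show ?thesis by simp
  qed
qed

end

context graph_product
begin

lemma prod_K2_layer_cover:
  assumes S: "total_dominating_set (VG \<times> VH) prod_E S" and H: "VH = {h, h'}" and "u \<in> VG"
  shows "(u, h') \<in> S \<or> (\<exists>a. (a, h) \<in> S \<and> EG a u)"
proof -
  obtain a b where ab: "(a, b) \<in> S" "a = u \<and> EH b h \<or> b = h \<and> EG a u"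
    using prod_tds_dominates[OF S assms(3)] H by blast
  have "b \<in> VH" using ab(1) prod_tds_subset[OF S] by blast
  then have "EH b h \<Longrightarrow> b = h'" using H H.edge_irrefl by blast
  then show ?thesis using ab by blast
qed

lemma tight_K2_factor:
  assumes no_isolated: "\<forall>x\<in>VG. \<exists>y. EG x y" and H: "VH = {h1, h2}" "h1 \<noteq> h2"
    and S: "total_dominating_set (VG \<times> VH) prod_E S"
    and tight: "card S = total_domination_number VG EG"
  shows "in_F1 VG EG \<or> in_F2 VG EG \<or> in_F3 VG EG"
proof -
  define A1 where "A1 = {u. (u, h1) \<in> S}"
  define A2 where "A2 = {u. (u, h2) \<in> S}"
  have S_eq: "S = A1 \<times> {h1} \<union> A2 \<times> {h2}"
    using prod_tds_subset[OF S] H unfolding A1_def A2_def by blast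
  interpret tight_layers VG EG A1 A2
  proof
    show "A1 \<subseteq> VG" "A2 \<subseteq> VG" using prod_tds_subset[OF S] unfolding A1_def A2_def by blast+
    show "\<forall>u\<in>VG. u \<in> A2 \<or> (\<exists>a\<in>A1. EG a u)"
      using prod_K2_layer_cover[OF S H(1)] unfolding A1_def A2_def by blast
    show "\<forall>u\<in>VG. u \<in> A1 \<or> (\<exists>a\<in>A2. EG a u)"
      using prod_K2_layer_cover[OF S, of h2 h1] H(1) unfolding A1_def A2_def by (metis insert_commute mem_Collect_eq)
    have "finite A1" "finite A2"
      using \<open>A1 \<subseteq> VG\<close> \<open>A2 \<subseteq> VG\<close> G.finite_V finite_subset by blast+
    then have "card S = card A1 + card A2"
      unfolding S_eq using H(2) by (subst card_Un_disjoint) auto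
    then show "total_domination_number VG EG = card A1 + card A2" using tight by simp
  qed (rule no_isolated)
  show ?thesis by (rule in_F1_F2_F3)
qed

lemma tdn_prod_le_cover:
  assumes "T \<subseteq> VG \<times> VH" "\<forall>u\<in>VG. \<forall>v\<in>VH. \<exists>s\<in>T. prod_E s (u, v)"
  shows "total_domination_number (VG \<times> VH) prod_E \<le> card T"
  using assms by (intro total_domination_number_le) (auto simp: total_dominating_set_iff)

lemma K2_other_vertex:
  assumes "VH = {h1, h2}" "EH h1 h2" "v \<in> VH"
  shows "\<exists>v'\<in>VH. EH v' v"
  using assms H.edge_sym by blast

lemma prod_K2_cover_F1:
  assumes H: "VH = {h1, h2}" "EH h1 h2" and X: "X \<subseteq> VG" and F1: "in_F1 X (induced_edges EG X)"
  shows "\<exists>T\<subseteq>VG \<times> VH. (\<forall>u\<in>X. \<forall>v\<in>VH. \<exists>s\<in>T. prod_E s (u, v))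
           \<and> card T \<le> total_domination_number X (induced_edges EG X)"
proof -
  have "dominating_set X (induced_edges EG X) X" unfolding dominating_set_def by blast
  then obtain M where M: "dominating_set X (induced_edges EG X) M"
      "card M = domination_number X (induced_edges EG X)"
    by (rule domination_number_obtain)
  have MX: "M \<subseteq> X" using M(1) unfolding dominating_set_def by blast
  have "\<exists>s\<in>M \<times> VH. prod_E s (u, v)" if u: "u \<in> X" and v: "v \<in> VH" for u v
  proof (cases "u \<in> M")
    case True
    obtain v' where "v' \<in> VH" "EH v' v" using K2_other_vertex[OF H v] by blast
    then show ?thesis using True u v X by (intro bexI[of _ "(u, v')"]) (auto simp: cart_edges_iff)
  next
    case False
    then obtain w where "w \<in> M" "EG w u"
      using M(1) u unfolding dominating_set_def induced_edges_def by blast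
    then show ?thesis using u v X MX by (intro bexI[of _ "(w, v)"]) (auto simp: cart_edges_iff)
  qed
  moreover have "card (M \<times> VH) = total_domination_number X (induced_edges EG X)"
  proof -
    have "h1 \<noteq> h2" using H(2) H.edge_irrefl by blast
    then show ?thesis using F1 M(2) H(1) unfolding in_F1_def by (simp add: card_cartesian_product)
  qed
  moreover have "M \<times> VH \<subseteq> VG \<times> VH" using MX X by blast
  ultimately show ?thesis by (metis order_refl)
qed

lemma prod_K2_F2_layers_dominate:
  assumes H: "VH = {h1, h2}" "EH h1 h2" and X: "X \<subseteq> VG"
    and D1: "D1 = X - nbhd X (induced_edges EG X) D2" and D2: "D2 = X - nbhd X (induced_edges EG X) D1"
    and u: "u \<in> X" and v: "v \<in> VH"
  shows "\<exists>s\<in>D1 \<times> {h1} \<union> D2 \<times> {h2}. prod_E s (u, v)"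
proof -
  have uG: "u \<in> VG" using u X by blast
  have D12X: "D1 \<subseteq> X" "D2 \<subseteq> X" using D1 D2 by blast+
  have h21: "EH h2 h1" using H(2) H.edge_sym by blast
  consider "v = h1" "u \<in> nbhd X (induced_edges EG X) D1" | "v = h1" "u \<in> D2"
    | "v = h2" "u \<in> nbhd X (induced_edges EG X) D2" | "v = h2" "u \<in> D1"
    using u v H(1) D1 D2 by blast
  then show ?thesis
  proof cases
    case 1
    then obtain d where "d \<in> D1" "EG d u" by (auto simp: nbhd_induced_iff)
    then show ?thesis using 1 uG v X D12X by (intro bexI[of _ "(d, h1)"]) (auto simp: cart_edges_iff)
  next
    case 2
    then have "prod_E (u, h2) (u, v)" using uG H h21 by (simp add: cart_edges_iff)
    then show ?thesis using 2 by blast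
  next
    case 3
    then obtain d where "d \<in> D2" "EG d u" by (auto simp: nbhd_induced_iff)
    then show ?thesis using 3 uG v X D12X by (intro bexI[of _ "(d, h2)"]) (auto simp: cart_edges_iff)
  next
    case 4
    then have "prod_E (u, h1) (u, v)" using uG H by (simp add: cart_edges_iff)
    then show ?thesis using 4 by blast
  qed
qed

lemma prod_K2_cover_F2:
  assumes H: "VH = {h1, h2}" "EH h1 h2" and X: "X \<subseteq> VG" and F2: "in_F2 X (induced_edges EG X)"
  shows "\<exists>T\<subseteq>VG \<times> VH. (\<forall>u\<in>X. \<forall>v\<in>VH. \<exists>s\<in>T. prod_E s (u, v))
           \<and> card T \<le> total_domination_number X (induced_edges EG X)"
proof -
  obtain D D1 D2 where D: "card D = total_domination_number X (induced_edges EG X)"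
      "D1 \<union> D2 = D" "D1 \<inter> D2 = {}"
    and D1: "D1 = X - nbhd X (induced_edges EG X) D2" and D2: "D2 = X - nbhd X (induced_edges EG X) D1"
    using F2 unfolding in_F2_def by blast
  let ?T = "D1 \<times> {h1} \<union> D2 \<times> {h2}"
  have D12X: "D1 \<subseteq> X" "D2 \<subseteq> X" using D1 D2 by blast+
  have "finite X" using X G.finite_V finite_subset by blast
  then have "finite D1" "finite D2" using D12X finite_subset by blast+
  then have "card D = card D1 + card D2" unfolding D(2)[symmetric] using D(3) by (rule card_Un_disjoint)
  moreover have "card ?T \<le> card (D1 \<times> {h1}) + card (D2 \<times> {h2})" by (rule card_Un_le)
  ultimately have "card ?T \<le> card D" by (simp add: card_cartesian_product)
  moreover have "?T \<subseteq> VG \<times> VH" using D12X X H(1) by blast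
  ultimately show ?thesis
    using prod_K2_F2_layers_dominate[OF H X D1 D2] D(1) by (metis (no_types, lifting))
qed

lemma tdn_prod_K2_le:
  assumes H: "VH = {h1, h2}" "EH h1 h2" and F: "in_F1 VG EG \<or> in_F2 VG EG \<or> in_F3 VG EG"
  shows "total_domination_number (VG \<times> VH) prod_E \<le> total_domination_number VG EG"
proof -
  have induced_VG: "induced_edges EG VG = EG" by (rule graph_induced_edges_self[OF G.graph])
  from F consider "in_F1 VG (induced_edges EG VG)" | "in_F2 VG (induced_edges EG VG)" | "in_F3 VG EG"
    unfolding induced_VG by blast
  then show ?thesis
  proof cases
    case 1
    then show ?thesis using prod_K2_cover_F1[OF H order_refl] tdn_prod_le_cover induced_VG
      by (metis order_trans)
  next
    case 2
    then show ?thesis using prod_K2_cover_F2[OF H order_refl] tdn_prod_le_cover induced_VG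
      by (metis order_trans)
  next
    case 3
    then obtain V1 V2 where V: "V1 \<union> V2 = VG"
      and F12: "in_F1 V1 (induced_edges EG V1)" "in_F2 V2 (induced_edges EG V2)"
      and tdn: "total_domination_number VG EG =
        total_domination_number V1 (induced_edges EG V1) + total_domination_number V2 (induced_edges EG V2)"
      unfolding in_F3_def by blast
    obtain T1 where T1: "T1 \<subseteq> VG \<times> VH" "\<forall>u\<in>V1. \<forall>v\<in>VH. \<exists>s\<in>T1. prod_E s (u, v)"
        "card T1 \<le> total_domination_number V1 (induced_edges EG V1)"
      using prod_K2_cover_F1[OF H _ F12(1)] V by blast
    obtain T2 where T2: "T2 \<subseteq> VG \<times> VH" "\<forall>u\<in>V2. \<forall>v\<in>VH. \<exists>s\<in>T2. prod_E s (u, v)"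
        "card T2 \<le> total_domination_number V2 (induced_edges EG V2)"
      using prod_K2_cover_F2[OF H _ F12(2)] V by blast
    have "total_domination_number (VG \<times> VH) prod_E \<le> card (T1 \<union> T2)"
      using T1 T2 V by (intro tdn_prod_le_cover) blast+
    then show ?thesis using card_Un_le[of T1 T2] T1(3) T2(3) tdn by linarith
  qed
qed

lemma tdn_prod_le_2:
  assumes G: "VG = {a, b}" "EG a b" and w: "w \<in> VH" "\<forall>v\<in>VH. v \<noteq> w \<longrightarrow> EH w v"
  shows "total_domination_number (VG \<times> VH) prod_E \<le> 2"
proof -
  have ba: "EG b a" using G(2) G.edge_sym by blast
  have "\<exists>s\<in>{(a, w), (b, w)}. prod_E s (u, v)" if "u \<in> VG" "v \<in> VH" for u v
  proof (cases "v = w")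
    case True
    then show ?thesis using that G ba w(1) by (auto simp: cart_edges_iff)
  next
    case False
    then show ?thesis using that G w by (auto simp: cart_edges_iff)
  qed
  then have "total_domination_number (VG \<times> VH) prod_E \<le> card {(a, w), (b, w)}"
    using G w(1) by (intro tdn_prod_le_cover) auto
  also have "\<dots> \<le> 2" by (simp add: card_insert_if)
  finally show ?thesis .
qed

end

lemma (in graph_product) tdn_prod_eq_cases:
  assumes "connected_graph VG EG" "VG \<noteq> {}" and no_isolated: "\<forall>x\<in>VG. \<exists>y. EG x y"
    and "connected_graph VH EH" "nontrivial_graph VH EH"
    and eq: "total_domination_number VG EG = total_domination_number (VG \<times> VH) prod_E"
  shows "(graph_iso VG EG K2_V K2_E \<and> domination_number VH EH = 1)
    \<or> (graph_iso VH EH K2_V K2_E \<and> (in_F1 VG EG \<or> in_F2 VG EG \<or> in_F3 VG EG))"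
proof -
  obtain S where S: "total_dominating_set (VG \<times> VH) prod_E S" "card S = total_domination_number VG EG"
    using total_domination_number_obtain[OF prod_tds_exists[OF no_isolated]] eq by metis
  have "2 \<le> card VH" using assms(5) unfolding nontrivial_graph_def .
  then consider "3 \<le> card VH" | h1 h2 where "VH = {h1, h2}" "h1 \<noteq> h2"
    by (metis card_2_iff le_antisym not_less_eq_eq numeral_3_eq_3 numeral_2_eq_2)
  then show ?thesis
  proof cases
    case 1
    then show ?thesis using tight_large_factor[OF assms(1,2) no_isolated 1 S] by blast
  next
    case (2 h1 h2)
    then have "EH h1 h2"
      using H.connected_nontrivial_has_neighbour[OF assms(4,5)] H.edge_snd H.edge_irrefl by blast
    then have "graph_iso VH EH K2_V K2_E" using 2 H.graph_iso_K2_iff by blast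
    then show ?thesis using tight_K2_factor[OF no_isolated 2 S] by blast
  qed
qed

lemma (in graph_product) tdn_prod_le_cases:
  assumes "(graph_iso VG EG K2_V K2_E \<and> domination_number VH EH = 1)
    \<or> (graph_iso VH EH K2_V K2_E \<and> (in_F1 VG EG \<or> in_F2 VG EG \<or> in_F3 VG EG))"
  shows "total_domination_number (VG \<times> VH) prod_E \<le> total_domination_number VG EG"
  using assms
proof
  assume "graph_iso VG EG K2_V K2_E \<and> domination_number VH EH = 1"
  then obtain a b w where "VG = {a, b}" "EG a b" "w \<in> VH" "\<forall>v\<in>VH. v \<noteq> w \<longrightarrow> EH w v"
    unfolding G.graph_iso_K2_iff H.domination_number_eq_1_iff by blast
  then show ?thesis using tdn_prod_le_2 G.total_domination_number_K2 by metis
next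
  assume "graph_iso VH EH K2_V K2_E \<and> (in_F1 VG EG \<or> in_F2 VG EG \<or> in_F3 VG EG)"
  then obtain h1 h2 where "VH = {h1, h2}" "EH h1 h2" "in_F1 VG EG \<or> in_F2 VG EG \<or> in_F3 VG EG"
    using H.graph_iso_K2_iff by blast
  then show ?thesis by (rule tdn_prod_K2_le)
qed

theorem theorem4:
  fixes VG :: "'a set" and EG :: "'a \<Rightarrow> 'a \<Rightarrow> bool"
    and VH :: "'b set" and EH :: "'b \<Rightarrow> 'b \<Rightarrow> bool"
  assumes "graph VG EG" "connected_graph VG EG" "nontrivial_graph VG EG"
    and "graph VH EH" "connected_graph VH EH" "nontrivial_graph VH EH"
    and "total_domination_number VH EH = 2"
  shows "total_domination_number VG EG
           = total_domination_number (VG \<times> VH) (cart_edges VG EG VH EH)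
         \<longleftrightarrow> (graph_iso VG EG K2_V K2_E \<and> domination_number VH EH = 1)
            \<or> (graph_iso VH EH K2_V K2_E \<and> (in_F1 VG EG \<or> in_F2 VG EG \<or> in_F3 VG EG))"
proof -
  interpret graph_product VG EG VH EH
    using assms(1,4) by (simp add: graph_product_def fin_graph_def)
  have no_isolated: "\<forall>x\<in>VG. \<exists>y. EG x y"
    using G.connected_nontrivial_has_neighbour assms(2,3) by blast
  have "VG \<noteq> {}" "VH \<noteq> {}" using assms(3,6) unfolding nontrivial_graph_def by auto
  then have "total_domination_number VG EG \<le> total_domination_number (VG \<times> VH) prod_E"
    using tdn_le_tdn_prod[OF no_isolated] by blast
  then show ?thesis
    using tdn_prod_eq_cases[OF assms(2) \<open>VG \<noteq> {}\<close> no_isolated assms(5,6)] tdn_prod_le_cases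
    by (meson le_antisym)
qed

end
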